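(* Let $\mathbf{x}_k\in\mathbb{R}^d$ and $\sigma_k>0$, and let $\epsilon>0$. Suppose the sampled estimates $\mathbf{g}_k,\mathbf{B}_k,\mathbf{T}_k$ at $\mathbf{x}_k$ satisfy the sampling condition with accuracy $\epsilon$ and constants $\kappa_g=\frac14,\kappa_b=\frac14,\kappa_t=\frac12$, and set $\epsilon_1:=\epsilon$. Let $\mathbf{s}_k$ satisfy the approximate minimization condition with constant $\theta>0$. Then $$\|\mathbf{s}_k\|\ge\kappa_k^{-1/3}\left(\chi_{f,1}(\mathbf{x}_k+\mathbf{s}_k)-\tfrac12\epsilon_1\right)^{1/3},\qquad\kappa_k=\sigma_k+\frac{L_t}{2}+\theta+\frac14,$$ where $(\cdot)^{1/3}$ is the real cube root.
   Context: $f(\mathbf{x})=\frac1n\sum_{i=1}^n f_i(\mathbf{x})$, each $f_i\in C^3(\mathbb{R}^d,\mathbb{R})$ with $f_i,\nabla f_i,\nabla^2 f_i,\nabla^3 f_i$ Lipschitz with constants $L_f,L_g,L_b,L_t$ (Euclidean norm on vectors; on $p$-th order tensors $\|A\|_{[p]}=\max_{\|\mathbf{h}_1\|=\dots=\|\mathbf{h}_p\|=1}|A[\mathbf{h}_1,\dots,\mathbf{h}_p]|$). For a third-order tensor $T$: $T[\mathbf{s}]^2=(\sum_{j,k}T_{ijk}s_js_k)_i$, $T[\mathbf{s}]^3=\sum_{i,j,k}T_{ijk}s_is_js_k$. Sampled estimates: $\mathbf{g}_k=\frac{1}{|\mathcal{S}^g|}\sum_{i\in\mathcal{S}^g}\nabla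 f_i(\mathbf{x}_k)$, $\mathbf{B}_k=\frac{1}{|\mathcal{S}^b|}\sum_{i\in\mathcal{S}^b}\nabla^2 f_i(\mathbf{x}_k)$, $\mathbf{T}_k=\frac{1}{|\mathcal{S}^t|}\sum_{i\in\mathcal{S}^t}\nabla^3 f_i(\mathbf{x}_k)$ for index sets $\mathcal{S}^g,\mathcal{S}^b,\mathcal{S}^t\subseteq\{1,\dots,n\}$. Model: $\phi_k(\mathbf{s})=f(\mathbf{x}_k)+\mathbf{g}_k^\top\mathbf{s}+\frac12\mathbf{s}^\top\mathbf{B}_k\mathbf{s}+\frac16\mathbf{T}_k[\mathbf{s}]^3$, $m_k(\mathbf{s})=\phi_k(\mathbf{s})+\frac{\sigma_k}{4}\|\mathbf{s}\|^4$. Sampling condition (accuracy $\epsilon$, constants $\kappa_g,\kappa_b,\kappa_t$): $\|\mathbf{g}_k-\nabla f(\mathbf{x}_k)\|\le\kappa_g\epsilon$; $\|(\mathbf{B}_k-\nabla^2 f(\mathbf{x}_k))\mathbf{s}\|\le\kappa_b\epsilon^{2/3}\|\mathbf{s}\|$ and $\|\mathbf{T}_k[\mathbf{s}]^2-\nabla^3 f(\mathbf{x}_k)[\mathbf{s}]^2\|\le\kappa_t\epsilon^{1/3}\|\mathbf{s}\|^2$ for all $\mathbf{s}\in\mathbb{R}^d$. Approximate minimization condition (constants $\theta>0,\zeta>0$): $m_k(\mathbf{s}_k)<m_k(\mathbf{0})$ and $\chi_{m,i}(\mathbf{x}_k,\mathbf{s}_k)\le\theta\|\mathbf{s}_k\|^{4-i}$,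 $i=1,2,3$, with $\chi_{m,1}=\|\nabla m_k(\mathbf{s})\|$, $\chi_{m,2}=\max(0,-\lambda_{min}(\nabla^2 m_k(\mathbf{s})))$, $\chi_{m,3}=\max\{|\nabla^3 m_k(\mathbf{s})[\mathbf{y}]^3|:\|\mathbf{y}\|=1,|\mathbf{y}^\top\nabla^2 m_k(\mathbf{s})\mathbf{y}|\le\zeta\}$ (empty maximum $=0$). Criticality: $\chi_{f,1}(\mathbf{x})=\|\nabla f(\mathbf{x})\|$. *)

theory Defs
  imports "HOL-Analysis.Analysis"
begin

text \<open>Third-order tensors are elements of real^'d^'d^'d, entry T_{ijk} = T $ i $ j $ k.
  Hessians are real^'d^'d. Vectors are real^'d with the Euclidean norm.\<close>

definition tsq :: "real^'d^'d^'d \<Rightarrow> real^'d \<Rightarrow> real^'d" where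
  "tsq T s = (\<chi> i. \<Sum>j\<in>UNIV. \<Sum>k\<in>UNIV. T $ i $ j $ k * s $ j * s $ k)"

definition tcube :: "real^'d^'d^'d \<Rightarrow> real^'d \<Rightarrow> real" where
  "tcube T s = (\<Sum>i\<in>UNIV. \<Sum>j\<in>UNIV. \<Sum>k\<in>UNIV. T $ i $ j $ k * s $ i * s $ j * s $ k)"

text \<open>Contraction of a third-order tensor in its last slot (directional derivative of a Hessian).\<close>
definition tdir :: "real^'d^'d^'d \<Rightarrow> real^'d \<Rightarrow> real^'d^'d" where
  "tdir T h = (\<chi> i j. \<Sum>k\<in>UNIV. T $ i $ j $ k * h $ k)"

definition tnorm2 :: "real^'d^'d \<Rightarrow> real" where
  "tnorm2 A = Sup {\<bar>h1 \<bullet> (A *v h2)\<bar> | h1 h2. norm h1 = 1 \<and> norm h2 = 1}"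

definition tnorm3 :: "real^'d^'d^'d \<Rightarrow> real" where
  "tnorm3 T = Sup {\<bar>\<Sum>i\<in>UNIV. \<Sum>j\<in>UNIV. \<Sum>k\<in>UNIV. T $ i $ j $ k * h1 $ i * h2 $ j * h3 $ k\<bar>
                  | h1 h2 h3. norm h1 = 1 \<and> norm h2 = 1 \<and> norm h3 = 1}"

definition avg :: "nat \<Rightarrow> (nat \<Rightarrow> 'a::real_vector) \<Rightarrow> 'a" where
  "avg n F = (1 / real n) *\<^sub>R (\<Sum>i\<in>{1..n}. F i)"

definition sample_avg :: "nat set \<Rightarrow> (nat \<Rightarrow> 'a::real_vector) \<Rightarrow> 'a" where
  "sample_avg S F = (1 / real (card S)) *\<^sub>R (\<Sum>i\<in>S. F i)"

definition model_phi :: "real \<Rightarrow> real^'d \<Rightarrow> real^'d^'d \<Rightarrow> real^'d^'d^'d \<Rightarrow> real^'d \<Rightarrow> real" where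
  "model_phi fx g B T s = fx + g \<bullet> s + 1/2 * (s \<bullet> (B *v s)) + 1/6 * tcube T s"

definition model_m :: "real \<Rightarrow> real^'d \<Rightarrow> real^'d^'d \<Rightarrow> real^'d^'d^'d \<Rightarrow> real \<Rightarrow> real^'d \<Rightarrow> real" where
  "model_m fx g B T \<sigma> s = model_phi fx g B T s + \<sigma> / 4 * norm s ^ 4"

definition model_grad :: "real^'d \<Rightarrow> real^'d^'d \<Rightarrow> real^'d^'d^'d \<Rightarrow> real \<Rightarrow> real^'d \<Rightarrow> real^'d" where
  "model_grad g B T \<sigma> s = g + B *v s + (1/2) *\<^sub>R tsq T s + (\<sigma> * norm s ^ 2) *\<^sub>R s"

definition model_hess :: "real^'d^'d \<Rightarrow> real^'d^'d^'d \<Rightarrow> real \<Rightarrow> real^'d \<Rightarrow> real^'d^'d" where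
  "model_hess B T \<sigma> s = B + tdir T s
     + \<sigma> *\<^sub>R ((norm s ^ 2) *\<^sub>R mat 1 + 2 *\<^sub>R (\<chi> i j. s $ i * s $ j))"

definition model_third :: "real^'d^'d^'d \<Rightarrow> real \<Rightarrow> real^'d \<Rightarrow> real^'d^'d^'d" where
  "model_third T \<sigma> s = (\<chi> i j k. T $ i $ j $ k + 2 * \<sigma> *
      ((if i = j then s $ k else 0) + (if i = k then s $ j else 0) + (if j = k then s $ i else 0)))"

definition lambda_min :: "real^'d^'d \<Rightarrow> real" where
  "lambda_min M = Inf {c. \<exists>v. v \<noteq> 0 \<and> M *v v = c *\<^sub>R v}"

definition chi_m1 :: "real^'d \<Rightarrow> real^'d^'d \<Rightarrow> real^'d^'d^'d \<Rightarrow> real \<Rightarrow> real^'d \<Rightarrow> real" where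
  "chi_m1 g B T \<sigma> s = norm (model_grad g B T \<sigma> s)"

definition chi_m2 :: "real^'d^'d \<Rightarrow> real^'d^'d^'d \<Rightarrow> real \<Rightarrow> real^'d \<Rightarrow> real" where
  "chi_m2 B T \<sigma> s = max 0 (- lambda_min (model_hess B T \<sigma> s))"

definition chi_m3 :: "real \<Rightarrow> real^'d^'d \<Rightarrow> real^'d^'d^'d \<Rightarrow> real \<Rightarrow> real^'d \<Rightarrow> real" where
  "chi_m3 \<zeta> B T \<sigma> s =
     (let A = {\<bar>tcube (model_third T \<sigma> s) y\<bar> | y. norm y = 1 \<and>
                 \<bar>y \<bullet> (model_hess B T \<sigma> s *v y)\<bar> \<le> \<zeta>}
      in if A = {} then 0 else Sup A)"

text \<open>Sampling condition with accuracy eps and constants kg kb kt, comparing the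
  estimates (g, B, T) with the exact derivatives (G, H, TT) at the current iterate.\<close>
definition sampling_cond ::
  "real \<Rightarrow> real \<Rightarrow> real \<Rightarrow> real \<Rightarrow> real^'d \<Rightarrow> real^'d^'d \<Rightarrow> real^'d^'d^'d
     \<Rightarrow> real^'d \<Rightarrow> real^'d^'d \<Rightarrow> real^'d^'d^'d \<Rightarrow> bool" where
  "sampling_cond eps kg kb kt g B T G H TT \<longleftrightarrow>
     norm (g - G) \<le> kg * eps \<and>
     (\<forall>s. norm ((B - H) *v s) \<le> kb * eps powr (2/3) * norm s) \<and>
     (\<forall>s. norm (tsq T s - tsq TT s) \<le> kt * eps powr (1/3) * norm s ^ 2)"

definition approx_min_cond ::
  "real \<Rightarrow> real \<Rightarrow> real \<Rightarrow> real^'d \<Rightarrow> real^'d^'d \<Rightarrow> real^'d^'d^'d \<Rightarrow> real \<Rightarrow> real^'d \<Rightarrow> bool" where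
  "approx_min_cond \<theta> \<zeta> fx g B T \<sigma> s \<longleftrightarrow>
     model_m fx g B T \<sigma> s < model_m fx g B T \<sigma> 0 \<and>
     chi_m1 g B T \<sigma> s \<le> \<theta> * norm s ^ 3 \<and>
     chi_m2 B T \<sigma> s \<le> \<theta> * norm s ^ 2 \<and>
     chi_m3 \<zeta> B T \<sigma> s \<le> \<theta> * norm s"

end

theory Submission
  imports Defs
begin

text \<open>Write \<open>\<nabla>f(x\<^sub>k + s\<^sub>k)\<close> as the second-order Taylor remainder of the exact gradient,
  plus the sampling errors of \<open>g\<^sub>k, B\<^sub>k, T\<^sub>k\<close>, plus the model gradient \<open>\<nabla>m\<^sub>k(s\<^sub>k)\<close>, minus
  \<open>\<sigma>\<^sub>k \<parallel>s\<^sub>k\<parallel>\<^sup>2 s\<^sub>k\<close>. Lipschitz continuity of the third derivatives bounds the remainder by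
  \<open>L\<^sub>t/2 \<parallel>s\<^sub>k\<parallel>\<^sup>3\<close>, the approximate minimization condition bounds the model gradient by
  \<open>\<theta> \<parallel>s\<^sub>k\<parallel>\<^sup>3\<close>, and with \<open>u = \<epsilon>^(1/3)\<close> the sampling errors
  \<open>(u\<^sup>3 + u\<^sup>2\<parallel>s\<^sub>k\<parallel> + u\<parallel>s\<^sub>k\<parallel>\<^sup>2)/4\<close> are at most \<open>u\<^sup>3/2 + \<parallel>s\<^sub>k\<parallel>\<^sup>3/4\<close> by AM-GM.\<close>

definition trilin :: "real^'d^'d^'d \<Rightarrow> real^'d \<Rightarrow> real^'d \<Rightarrow> real^'d \<Rightarrow> real" where
  "trilin T a b c = (\<Sum>i\<in>UNIV. \<Sum>j\<in>UNIV. \<Sum>k\<in>UNIV. T $ i $ j $ k * a $ i * b $ j * c $ k)"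

lemma linear_trilin: "linear (\<lambda>T. trilin T a b c)"
  by (rule linearI) (simp_all add: trilin_def algebra_simps sum.distrib sum_distrib_left)

lemma linear_tdir: "linear (\<lambda>T. tdir T h)"
  by (rule linearI) (simp_all add: tdir_def vec_eq_iff algebra_simps sum.distrib sum_distrib_left)

lemma linear_matrix_vector_mult_left: "linear (\<lambda>M::real^'n^'m. M *v s)"
  by (rule linearI) (simp_all add: matrix_vector_mult_add_rdistrib scaleR_matrix_vector_assoc)

lemma trilin_scaleR: "trilin T (x *\<^sub>R a) (y *\<^sub>R b) (z *\<^sub>R c) = x * y * z * trilin T a b c"
  by (simp add: trilin_def sum_distrib_left mult_ac)

lemma inner_tsq: "w \<bullet> tsq T s = trilin T w s s"
  by (simp add: inner_vec_def tsq_def trilin_def sum_distrib_left mult_ac)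

lemma inner_tdir: "w \<bullet> (tdir T h *v s) = trilin T w s h"
  by (simp add: inner_vec_def tdir_def trilin_def matrix_vector_mult_def
      sum_distrib_left sum_distrib_right mult_ac)

lemma abs_trilin_le_tnorm3:
  fixes T :: "real^'d^'d^'d"
  assumes "norm a = 1" "norm b = 1" "norm c = 1"
  shows "\<bar>trilin T a b c\<bar> \<le> tnorm3 T"
  unfolding tnorm3_def
proof (rule cSup_upper)
  show "\<bar>trilin T a b c\<bar> \<in> {\<bar>\<Sum>i\<in>UNIV. \<Sum>j\<in>UNIV. \<Sum>k\<in>UNIV. T $ i $ j $ k * h1 $ i * h2 $ j * h3 $ k\<bar>
                  | h1 h2 h3. norm h1 = 1 \<and> norm h2 = 1 \<and> norm h3 = 1}"
    using assms unfolding trilin_def by blast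
  have "\<bar>trilin T h1 h2 h3\<bar> \<le> (\<Sum>i\<in>UNIV. \<Sum>j\<in>UNIV. \<Sum>k\<in>UNIV. \<bar>T $ i $ j $ k\<bar>)"
    if "norm h1 = 1" "norm h2 = 1" "norm h3 = 1" for h1 h2 h3 :: "real^'d"
  proof -
    have "\<bar>h1 $ i * h2 $ j * h3 $ k\<bar> \<le> 1" for i j k
      using that component_le_norm_cart[of h1 i] component_le_norm_cart[of h2 j]
        component_le_norm_cart[of h3 k]
      by (auto simp: abs_mult intro!: mult_le_one)
    then have "\<bar>T $ i $ j $ k * h1 $ i * h2 $ j * h3 $ k\<bar> \<le> \<bar>T $ i $ j $ k\<bar>" for i j k
      using mult_left_le[of "\<bar>h1 $ i * h2 $ j * h3 $ k\<bar>" "\<bar>T $ i $ j $ k\<bar>"]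
      by (simp add: abs_mult mult_ac)
    then show ?thesis
      unfolding trilin_def
      by (intro order.trans[OF sum_abs] sum_mono order.trans[OF sum_abs]) auto
  qed
  then show "bdd_above {\<bar>\<Sum>i\<in>UNIV. \<Sum>j\<in>UNIV. \<Sum>k\<in>UNIV. T $ i $ j $ k * h1 $ i * h2 $ j * h3 $ k\<bar>
                  | h1 h2 h3. norm h1 = 1 \<and> norm h2 = 1 \<and> norm h3 = 1}"
    unfolding bdd_above_def trilin_def by blast
qed

lemma abs_trilin_le: "\<bar>trilin T a b c\<bar> \<le> tnorm3 T * norm a * norm b * norm c"
proof (cases "a = 0 \<or> b = 0 \<or> c = 0")
  case True
  then show ?thesis by (auto simp: trilin_def)
next
  case False
  then have pos: "norm a > 0" "norm b > 0" "norm c > 0" by auto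
  have "trilin T a b c
      = norm a * norm b * norm c * trilin T (a /\<^sub>R norm a) (b /\<^sub>R norm b) (c /\<^sub>R norm c)"
    using pos by (simp add: trilin_scaleR field_simps)
  moreover have "\<bar>trilin T (a /\<^sub>R norm a) (b /\<^sub>R norm b) (c /\<^sub>R norm c)\<bar> \<le> tnorm3 T"
    using pos by (intro abs_trilin_le_tnorm3) auto
  ultimately show ?thesis
    using pos by (simp add: abs_mult mult_ac mult_left_mono)
qed

lemma tnorm3_nonneg: "0 \<le> tnorm3 T"
proof -
  let ?e = "axis undefined (1::real) :: real^'d"
  have "0 \<le> \<bar>trilin T ?e ?e ?e\<bar>" by simp
  also have "\<dots> \<le> tnorm3 T"
    by (intro abs_trilin_le_tnorm3) (simp_all add: norm_axis_1)
  finally show ?thesis .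
qed

lemma tnorm3_lipschitz_const_nonneg:
  fixes T :: "real^'d \<Rightarrow> real^'d^'d^'d"
  assumes "\<forall>x y. tnorm3 (T x - T y) \<le> L * norm (x - y)"
  shows "0 \<le> L"
proof -
  let ?e = "axis undefined 1 :: real^'d"
  have "0 \<le> tnorm3 (T ?e - T 0)"
    by (rule tnorm3_nonneg)
  also have "\<dots> \<le> L"
    using assms by (metis diff_zero mult.right_neutral norm_axis_1)
  finally show ?thesis .
qed

lemma linear_avg: "linear L \<Longrightarrow> L (avg n F) = avg n (\<lambda>i. L (F i))"
  by (simp add: avg_def linear_scale linear_sum)

lemma avg_diff: "avg n F - avg n G = avg n (\<lambda>i. F i - G i)"
  by (simp add: avg_def sum_subtractf scaleR_diff_right)

lemma norm_avg_le:
  assumes "n \<ge> 1" and "\<forall>i\<in>{1..n}. norm (F i) \<le> c"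
  shows "norm (avg n F) \<le> c"
proof -
  have "norm (\<Sum>i\<in>{1..n}. F i) \<le> real n * c"
    using sum_norm_le[of "{1..n}" F "\<lambda>_. c"] assms(2) by simp
  then show ?thesis
    using assms(1) by (simp add: avg_def field_simps)
qed

lemma has_derivative_avg:
  assumes "\<forall>i\<in>{1..n}. (F i has_derivative F' i) (at y)"
  shows "((\<lambda>y. avg n (\<lambda>i. F i y)) has_derivative (\<lambda>h. avg n (\<lambda>i. F' i h))) (at y)"
  unfolding avg_def using assms by (intro has_derivative_scaleR_right has_derivative_sum) auto

lemma abs_trilin_avg_diff_le:
  assumes "n \<ge> 1" and "\<forall>i\<in>{1..n}. tnorm3 (F i - F' i) \<le> L"
  shows "\<bar>trilin (avg n F - avg n F') a b c\<bar> \<le> L * norm a * norm b * norm c"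
proof -
  have "\<bar>trilin (F i - F' i) a b c\<bar> \<le> L * norm a * norm b * norm c" if "i \<in> {1..n}" for i
    using abs_trilin_le[of "F i - F' i" a b c] assms(2) that
    by (meson mult_right_mono norm_ge_zero order_trans zero_le_mult_iff)
  then show ?thesis
    using norm_avg_le[OF assms(1), of "\<lambda>i. trilin (F i - F' i) a b c"]
    by (simp add: avg_diff linear_avg[OF linear_trilin])
qed

lemma has_real_derivative_inner_along_line:
  assumes "(F has_derivative F') (at (x + t *\<^sub>R s))"
  shows "((\<lambda>t. w \<bullet> F (x + t *\<^sub>R s)) has_real_derivative w \<bullet> F' s) (at t)"
proof -
  have "((\<lambda>t. F (x + t *\<^sub>R s)) has_derivative (\<lambda>h. F' (h *\<^sub>R s))) (at t)"
  proof (rule has_derivative_compose[of "\<lambda>t. x + t *\<^sub>R s" _ t UNIV F F'])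
    show "((\<lambda>t. x + t *\<^sub>R s) has_derivative (\<lambda>h. h *\<^sub>R s)) (at t)"
      by (auto intro!: derivative_eq_intros)
  qed (use assms in simp)
  then have "((\<lambda>t. w \<bullet> F (x + t *\<^sub>R s)) has_derivative (\<lambda>h. w \<bullet> F' (h *\<^sub>R s))) (at t)"
    by (rule bounded_linear.has_derivative[OF bounded_linear_inner_right])
  moreover have "(\<lambda>h. w \<bullet> F' (h *\<^sub>R s)) = (\<lambda>h. (w \<bullet> F' s) * h)"
    using linear_scale[OF has_derivative_linear[OF assms]] by (auto simp: mult.commute)
  ultimately show ?thesis
    by (simp add: has_field_derivative_def)
qed

lemma taylor2_remainder_le:
  fixes p0 p1 p2 :: "real \<Rightarrow> real"
  assumes "\<And>t. (p0 has_real_derivative p1 t) (at t)"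
    and "\<And>t. (p1 has_real_derivative p2 t) (at t)"
    and p2_lip: "\<And>t. 0 \<le> t \<Longrightarrow> t \<le> 1 \<Longrightarrow> \<bar>p2 t - p2 0\<bar> \<le> K * t"
  shows "\<bar>p0 1 - p0 0 - p1 0 - p2 0 / 2\<bar> \<le> K / 2"
proof -
  define df where "df m = [p0, p1, p2] ! m" for m
  have "\<forall>m t. m < 2 \<and> 0 \<le> t \<and> t \<le> 1 \<longrightarrow> (df m has_real_derivative df (Suc m) t) (at t)"
    using assms(1,2) by (auto simp: df_def less_2_cases_iff)
  then obtain t where t: "0 < t" "t < 1"
    and "p0 1 = (\<Sum>m<2. df m 0 / fact m * 1 ^ m) + df 2 t / fact 2 * 1 ^ 2"
    using Maclaurin[of 1 2 df p0] by (auto simp: df_def)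
  then have remainder: "p0 1 - p0 0 - p1 0 - p2 0 / 2 = (p2 t - p2 0) / 2"
    by (simp add: df_def numeral_2_eq_2)
  have "K \<ge> 0"
    using p2_lip[of 1] by simp
  then have "\<bar>p2 t - p2 0\<bar> \<le> K"
    using p2_lip[of t] t mult_left_le[of t K] by simp
  then show ?thesis
    unfolding remainder by simp
qed

lemma taylor_remainder_le:
  fixes G :: "real^'d \<Rightarrow> real^'d" and H :: "real^'d \<Rightarrow> real^'d^'d"
    and T :: "real^'d \<Rightarrow> real^'d^'d^'d"
  assumes G': "\<And>y. (G has_derivative (\<lambda>h. H y *v h)) (at y)"
    and H': "\<And>y. (H has_derivative (\<lambda>h. tdir (T y) h)) (at y)"
    and T_lip: "\<And>y a b c. \<bar>trilin (T y - T x) a b c\<bar> \<le> L * norm (y - x) * norm a * norm b * norm c"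
    and "0 \<le> L"
  shows "norm (G (x + s) - G x - H x *v s - (1/2) *\<^sub>R tsq (T x) s) \<le> L / 2 * norm s ^ 3"
proof -
  define r where "r = G (x + s) - G x - H x *v s - (1/2) *\<^sub>R tsq (T x) s"
  \<comment> \<open>Expanding \<open>G\<close> along the segment tested against \<open>r\<close> itself gives \<open>\<parallel>r\<parallel>\<^sup>2\<close>.\<close>
  define p0 where "p0 t = r \<bullet> G (x + t *\<^sub>R s)" for t
  define p1 where "p1 t = r \<bullet> (H (x + t *\<^sub>R s) *v s)" for t
  define p2 where "p2 t = trilin (T (x + t *\<^sub>R s)) r s s" for t
  have "(p0 has_real_derivative p1 t) (at t)" for t
    unfolding p0_def p1_def by (rule has_real_derivative_inner_along_line[OF G'])
  moreover have "(p1 has_real_derivative p2 t) (at t)" for t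
  proof -
    have "bounded_linear (\<lambda>M::real^'d^'d. M *v s)"
      using linear_matrix_vector_mult_left by (rule linear_conv_bounded_linear[THEN iffD1])
    from bounded_linear.has_derivative[OF this H']
    have "((\<lambda>y. H y *v s) has_derivative (\<lambda>h. tdir (T y) h *v s)) (at y)" for y .
    then show ?thesis
      unfolding p1_def p2_def inner_tdir[symmetric]
      by (rule has_real_derivative_inner_along_line)
  qed
  moreover have "\<bar>p2 t - p2 0\<bar> \<le> (L * norm r * norm s ^ 3) * t" if "0 \<le> t" for t
    using T_lip[of "x + t *\<^sub>R s" r s s] that
    by (simp add: p2_def linear_diff[OF linear_trilin, symmetric] power3_eq_cube mult_ac)
  ultimately have "\<bar>p0 1 - p0 0 - p1 0 - p2 0 / 2\<bar> \<le> L * norm r * norm s ^ 3 / 2"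
    by (rule taylor2_remainder_le)
  moreover have "p0 1 - p0 0 - p1 0 - p2 0 / 2 = norm r ^ 2"
    unfolding p0_def p1_def p2_def inner_tsq[symmetric] power2_norm_eq_inner
    by (simp add: r_def inner_diff_right)
  ultimately have "norm r * norm r \<le> norm r * (L / 2 * norm s ^ 3)"
    by (simp add: power2_eq_square mult_ac)
  then show ?thesis
    unfolding r_def[symmetric] using \<open>0 \<le> L\<close>
    by (cases "r = 0") auto
qed

lemma norm_grad_le_model_errors:
  assumes samp: "sampling_cond \<epsilon> kg kb kt g B T G H TT"
    and taylor: "norm (G1 - G - H *v s - (1/2) *\<^sub>R tsq TT s) \<le> R"
    and "0 \<le> \<sigma>"
  shows "norm G1 \<le> R + kg * \<epsilon> + kb * \<epsilon> powr (2/3) * norm s + kt / 2 * \<epsilon> powr (1/3) * norm s ^ 2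
                    + norm (model_grad g B T \<sigma> s) + \<sigma> * norm s ^ 3"
proof -
  have "G1 = (G1 - G - H *v s - (1/2) *\<^sub>R tsq TT s) - (g - G) - (B - H) *v s
             - (1/2) *\<^sub>R (tsq T s - tsq TT s) + model_grad g B T \<sigma> s - (\<sigma> * norm s ^ 2) *\<^sub>R s"
    by (simp add: model_grad_def matrix_vector_mult_diff_rdistrib algebra_simps)
  also have "norm \<dots> \<le> norm (G1 - G - H *v s - (1/2) *\<^sub>R tsq TT s) + norm (g - G) + norm ((B - H) *v s)
             + norm ((1/2) *\<^sub>R (tsq T s - tsq TT s)) + norm (model_grad g B T \<sigma> s)
             + norm ((\<sigma> * norm s ^ 2) *\<^sub>R s)"
    by (intro order.trans[OF norm_triangle_ineq4] order.trans[OF norm_triangle_ineq]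
        add_mono order_refl)
  also have "norm ((\<sigma> * norm s ^ 2) *\<^sub>R s) = \<sigma> * norm s ^ 3"
    using \<open>0 \<le> \<sigma>\<close> by (simp add: power3_eq_cube power2_eq_square)
  finally have "norm G1 \<le> norm (G1 - G - H *v s - (1/2) *\<^sub>R tsq TT s) + norm (g - G)
      + norm ((B - H) *v s) + norm ((1/2) *\<^sub>R (tsq T s - tsq TT s))
      + norm (model_grad g B T \<sigma> s) + \<sigma> * norm s ^ 3" .
  moreover have "norm (g - G) \<le> kg * \<epsilon>"
    and "norm ((B - H) *v s) \<le> kb * \<epsilon> powr (2/3) * norm s"
    and "norm ((1/2) *\<^sub>R (tsq T s - tsq TT s)) \<le> kt / 2 * \<epsilon> powr (1/3) * norm s ^ 2"
    using samp unfolding sampling_cond_def by auto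
  ultimately show ?thesis
    using taylor by linarith
qed

lemma am_gm_cube:
  fixes u a :: real
  assumes "0 \<le> u" "0 \<le> a"
  shows "3 * (u\<^sup>2 * a) \<le> 2 * u ^ 3 + a ^ 3"
proof -
  have "0 \<le> (u - a)\<^sup>2 * (2 * u + a)"
    using assms by simp
  then show ?thesis
    by (simp add: power2_eq_square power3_eq_cube algebra_simps)
qed

lemma powr_neg_third_mult_root_le:
  assumes "0 < \<kappa>" "0 \<le> a" "y \<le> \<kappa> * a ^ 3"
  shows "\<kappa> powr (-1/3) * root 3 y \<le> a"
proof -
  have "\<kappa> powr (-1/3) * root 3 y \<le> \<kappa> powr (-1/3) * root 3 (\<kappa> * a ^ 3)"
    using assms by (intro mult_left_mono) auto
  also have "\<dots> = \<kappa> powr (-1/3) * root 3 \<kappa> * a"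
    using assms by (simp add: real_root_mult real_root_pos2)
  also have "\<dots> = a"
    using assms by (simp add: root_powr_inverse powr_add[symmetric])
  finally show ?thesis .
qed

theorem lemma2:
  fixes n :: nat
    and f :: "nat \<Rightarrow> real^'d \<Rightarrow> real"
    and gf :: "nat \<Rightarrow> real^'d \<Rightarrow> real^'d"
    and hf :: "nat \<Rightarrow> real^'d \<Rightarrow> real^'d^'d"
    and tf :: "nat \<Rightarrow> real^'d \<Rightarrow> real^'d^'d^'d"
    and Lf Lg Lb Lt :: real
    and Sg Sb St :: "nat set"
    and xk sk :: "real^'d"
    and \<sigma> \<epsilon> \<theta> \<zeta> :: real
  assumes n: "n \<ge> 1"
    and d1: "\<forall>i\<in>{1..n}. \<forall>x. (f i has_derivative (\<lambda>h. gf i x \<bullet> h)) (at x)"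
    and d2: "\<forall>i\<in>{1..n}. \<forall>x. (gf i has_derivative (\<lambda>h. hf i x *v h)) (at x)"
    and d3: "\<forall>i\<in>{1..n}. \<forall>x. (hf i has_derivative (\<lambda>h. tdir (tf i x) h)) (at x)"
    and Lip_f: "\<forall>i\<in>{1..n}. \<forall>x y. \<bar>f i x - f i y\<bar> \<le> Lf * norm (x - y)"
    and Lip_g: "\<forall>i\<in>{1..n}. \<forall>x y. norm (gf i x - gf i y) \<le> Lg * norm (x - y)"
    and Lip_b: "\<forall>i\<in>{1..n}. \<forall>x y. tnorm2 (hf i x - hf i y) \<le> Lb * norm (x - y)"
    and Lip_t: "\<forall>i\<in>{1..n}. \<forall>x y. tnorm3 (tf i x - tf i y) \<le> Lt * norm (x - y)"
    and S: "Sg \<subseteq> {1..n}" "Sb \<subseteq> {1..n}" "St \<subseteq> {1..n}"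
    and pos: "\<sigma> > 0" "\<epsilon> > 0" "\<theta> > 0" "\<zeta> > 0"
    and samp: "sampling_cond \<epsilon> (1/4) (1/4) (1/2)
                 (sample_avg Sg (\<lambda>i. gf i xk)) (sample_avg Sb (\<lambda>i. hf i xk))
                 (sample_avg St (\<lambda>i. tf i xk))
                 (avg n (\<lambda>i. gf i xk)) (avg n (\<lambda>i. hf i xk)) (avg n (\<lambda>i. tf i xk))"
    and amin: "approx_min_cond \<theta> \<zeta> (avg n (\<lambda>i. f i xk))
                 (sample_avg Sg (\<lambda>i. gf i xk)) (sample_avg Sb (\<lambda>i. hf i xk))
                 (sample_avg St (\<lambda>i. tf i xk)) \<sigma> sk"
  shows "norm sk \<ge> (\<sigma> + Lt / 2 + \<theta> + 1/4) powr (-1/3)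
                    * root 3 (norm (avg n (\<lambda>i. gf i (xk + sk))) - 1/2 * \<epsilon>)"
proof -
  let ?G = "\<lambda>y. avg n (\<lambda>i. gf i y)" and ?H = "\<lambda>y. avg n (\<lambda>i. hf i y)"
    and ?T = "\<lambda>y. avg n (\<lambda>i. tf i y)" and ?a = "norm sk" and ?u = "\<epsilon> powr (1/3)"
  have "0 \<le> Lt"
    using Lip_t n by (intro tnorm3_lipschitz_const_nonneg[of "tf 1"]) auto
  have "(?G has_derivative (\<lambda>h. ?H y *v h)) (at y)" for y
    using has_derivative_avg[of n gf "\<lambda>i h. hf i y *v h" y] d2
    by (simp add: linear_avg[OF linear_matrix_vector_mult_left])
  moreover have "(?H has_derivative (\<lambda>h. tdir (?T y) h)) (at y)" for y
    using has_derivative_avg[of n hf "\<lambda>i h. tdir (tf i y) h" y] d3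
    by (simp add: linear_avg[OF linear_tdir])
  moreover have "\<bar>trilin (?T y - ?T xk) a b c\<bar> \<le> Lt * norm (y - xk) * norm a * norm b * norm c"
    for y a b c using Lip_t by (intro abs_trilin_avg_diff_le n) auto
  ultimately have taylor: "norm (?G (xk + sk) - ?G xk - ?H xk *v sk - (1/2) *\<^sub>R tsq (?T xk) sk)
      \<le> Lt / 2 * ?a ^ 3"
    using \<open>0 \<le> Lt\<close> by (rule taylor_remainder_le)
  have "\<epsilon> = ?u ^ 3" "\<epsilon> powr (2/3) = ?u\<^sup>2"
    using pos by (simp_all add: powr_realpow[symmetric] powr_powr)
  then have "norm (?G (xk + sk)) \<le> Lt / 2 * ?a ^ 3 + 1/4 * ?u ^ 3 + 1/4 * (?u\<^sup>2 * ?a)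
      + 1/4 * (?a\<^sup>2 * ?u) + \<theta> * ?a ^ 3 + \<sigma> * ?a ^ 3"
    using norm_grad_le_model_errors[OF samp taylor, where \<sigma>=\<sigma>] amin pos
    unfolding approx_min_cond_def chi_m1_def by (simp add: mult_ac)
  moreover have "3 * (?u\<^sup>2 * ?a) \<le> 2 * ?u ^ 3 + ?a ^ 3" "3 * (?a\<^sup>2 * ?u) \<le> 2 * ?a ^ 3 + ?u ^ 3"
    by (simp_all add: am_gm_cube)
  ultimately have "norm (?G (xk + sk)) - 1/2 * \<epsilon> \<le> (\<sigma> + Lt / 2 + \<theta> + 1/4) * ?a ^ 3"
    using \<open>\<epsilon> = ?u ^ 3\<close> by (simp add: algebra_simps)
  then show ?thesis
    using pos \<open>0 \<le> Lt\<close> by (intro powr_neg_third_mult_root_le) auto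
qed

end
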